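(* Let $\psi\colon\mathbb R^2\to\mathbb R$ be smooth and $p_\ast\in\mathbb R^2$ be such that conditions 1–7 below hold with $N=2$. Let $\Omega>0$, $\alpha,c>0$, $\varpi\in\mathbb N$, $\mathsf X:=\mathbb R^2\times\mathbb S^1\subset\mathbb R^4$. For $\varepsilon>0$ let $V_\varepsilon([p,o]):=y_\ast-\psi(p)+\varepsilon\langle\nabla\psi(p),o-o_\perp\rangle^2$, and for $a>0$, $w\in\mathbb R$ let $\bar\Sigma^a_{\mathsf X}([p,o],w):=\big((\tfrac{\alpha c}2\langle\nabla\psi(p),o\rangle+a\phi^a([p,o])+w)\,o,\ \Omega o_\perp\big)$ with $\phi^a([p,o]):=\frac1{2\pi}\int_0^{2\pi}\int_0^1(1-s)U(\tau)^2v(\tau)\langle\nabla^2\psi(p+asU(\tau)o)o,o\rangle\,\mathrm ds\,\mathrm d\tau$, $U(\tau):=\alpha\sin(\varpi\tau)$, $v(\tau):=c\sin(\varpi\tau)$. Let $(\bar\Sigma^a_{\mathsf X}V_\varepsilon)(x,w)$ denote the Lie derivative of $V_\varepsilon$ along $x\mapsto\bar\Sigma^a_{\mathsf X}(x,w)$. Then there exists $\varepsilon_2>0$ such that $(\bar\Sigma^a_{\mathsf X}V_\varepsilon)(x,w)\le\big(2a|\phi^a(x)|+2|w|-\varepsilon\Omega|\nabla\psi(p)|\big)|\nabla\psi(p)|$ for every $\varepsilon\in(0,\varepsilon_2)$, every $a>0$, every $w\in\mathbb R$ and every $x=[p,o]\in\mathsf X$.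
   Context: $\mathbb S^1$ is the unit circle in $\mathbb R^2$; for $o\in\mathbb S^1$, $o_\perp\in\mathbb S^1$ is the unique element with $(o,o_\perp)$ a positively oriented orthonormal basis of $\mathbb R^2$. Notation: $y_\ast:=\psi(p_\ast)$, $\underline y:=\inf\psi\in\mathbb R\cup\{-\infty\}$, $|\nabla^2\psi(p)|$ operator norm, $\psi^{-1}(\ge y):=\{p:\psi(p)\ge y\}$. Conditions: (1) $\psi(p)<y_\ast$ for $p\ne p_\ast$; (2) $\nabla^2\psi(p_\ast)$ negative definite; (3) there is $r_1>0$ with $\psi(p_\ast+v)=\psi(p_\ast-v)$ for $|v|\le r_1$; (4) there is $c_1>0$ with $|\nabla^2\psi(p)|\le c_1$ for all $p$; (5) $\nabla\psi(p)\ne0$ for $p\ne p_\ast$; (6) for every $y\in(\underline y,y_\ast)$, $\psi^{-1}(\ge y)$ is compact; (7) there are $c_2,r_2,r_3>0$ with $|\nabla^2\psi(p+v)|\le c_2|\nabla\psi(p)|$ for all $|p-p_\ast|\ge r_2$, $|v|\le r_3$. *)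

theory Defs
  imports "HOL-Analysis.Analysis"
begin

definition grad :: "(real^2 \<Rightarrow> real) \<Rightarrow> real^2 \<Rightarrow> real^2" where
  "grad f p = (SOME g. GDERIV f p :> g)"

definition hess :: "(real^2 \<Rightarrow> real) \<Rightarrow> real^2 \<Rightarrow> real^2 \<Rightarrow> real^2" where
  "hess f p = frechet_derivative (grad f) (at p)"

text \<open>Iterated directional derivatives; smooth = C-infinity: all iterated derivatives
  exist and are (Frechet) differentiable everywhere.\<close>
fun dirderivs :: "('a::real_normed_vector \<Rightarrow> real) \<Rightarrow> 'a list \<Rightarrow> 'a \<Rightarrow> real" where
  "dirderivs f [] = f"
| "dirderivs f (v # vs) = (\<lambda>x. frechet_derivative (dirderivs f vs) (at x) v)"

definition smooth :: "('a::real_normed_vector \<Rightarrow> real) \<Rightarrow> bool" where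
  "smooth f \<longleftrightarrow> (\<forall>vs x. dirderivs f vs differentiable (at x))"

text \<open>o_perp: (o, o_perp) positively oriented orthonormal basis.\<close>
definition perp :: "real^2 \<Rightarrow> real^2" where
  "perp u = vector [- (u$2), u$1]"

definition lie_deriv ::
  "((real^2) \<times> (real^2) \<Rightarrow> real) \<Rightarrow> ((real^2) \<times> (real^2) \<Rightarrow> (real^2) \<times> (real^2)) \<Rightarrow> (real^2) \<times> (real^2) \<Rightarrow> real" where
  "lie_deriv V F x = frechet_derivative V (at x) (F x)"

definition Vfun :: "(real^2 \<Rightarrow> real) \<Rightarrow> real \<Rightarrow> real \<Rightarrow> (real^2) \<times> (real^2) \<Rightarrow> real" where
  "Vfun \<psi> ys \<epsilon> x = (case x of (p, u) \<Rightarrow>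
      ys - \<psi> p + \<epsilon> * (grad \<psi> p \<bullet> (u - perp u))\<^sup>2)"

text \<open>phi^a([p,o]) with U(tau) = alpha sin(m tau), v(tau) = c sin(m tau).\<close>
definition phi :: "(real^2 \<Rightarrow> real) \<Rightarrow> real \<Rightarrow> real \<Rightarrow> nat \<Rightarrow> real \<Rightarrow> (real^2) \<times> (real^2) \<Rightarrow> real" where
  "phi \<psi> \<alpha> c m a x = (case x of (p, u) \<Rightarrow>
     (1 / (2 * pi)) * integral {0..2*pi} (\<lambda>\<tau>. integral {0..1} (\<lambda>s.
        (1 - s) * (\<alpha> * sin (real m * \<tau>))\<^sup>2 * (c * sin (real m * \<tau>)) *
        (hess \<psi> (p + (a * s * (\<alpha> * sin (real m * \<tau>))) *\<^sub>R u) u \<bullet> u))))"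

definition SigmaX :: "(real^2 \<Rightarrow> real) \<Rightarrow> real \<Rightarrow> real \<Rightarrow> real \<Rightarrow> nat \<Rightarrow> real \<Rightarrow> real
     \<Rightarrow> (real^2) \<times> (real^2) \<Rightarrow> (real^2) \<times> (real^2)" where
  "SigmaX \<psi> \<alpha> c \<Omega> m a w x = (case x of (p, u) \<Rightarrow>
     ((\<alpha> * c / 2 * (grad \<psi> p \<bullet> u) + a * phi \<psi> \<alpha> c m a x + w) *\<^sub>R u, \<Omega> *\<^sub>R perp u))"

end

theory Submission
  imports Defs
begin

text \<open>Only smoothness and the Hessian bound (condition 4) are needed. Write
  \<open>A = \<langle>\<nabla>\<psi>(p), o\<rangle>\<close>, \<open>B = \<langle>\<nabla>\<psi>(p), o\<^sub>\<bottom>\<rangle>\<close>, \<open>h = \<langle>\<nabla>\<^sup>2\<psi>(p) o, o - o\<^sub>\<bottom>\<rangle>\<close>,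
  \<open>e = a \<phi>\<^sup>a + w\<close> and \<open>\<beta> = \<alpha>c/2\<close>. The chain rule gives the Lie derivative as
  \<open>-(\<beta>A + e)A + 2\<epsilon>(A - B)((\<beta>A + e)h + \<Omega>(A + B))\<close>, where \<open>A\<^sup>2 + B\<^sup>2 = |\<nabla>\<psi>(p)|\<^sup>2\<close> and
  \<open>|h| \<le> 2c\<^sub>1\<close>. The rotation \<open>\<Omega>o\<^sub>\<bottom>\<close> contributes \<open>2\<epsilon>\<Omega>(A\<^sup>2 - B\<^sup>2)\<close> and the gradient drift
  \<open>-\<beta>A\<^sup>2\<close>; for small \<open>\<epsilon>\<close> the drift absorbs every \<open>A\<^sup>2\<close> term, a Young inequality splits the
  cross term \<open>|A||B|\<close>, and what remains is \<open>-\<epsilon>\<Omega>(A\<^sup>2 + B\<^sup>2)\<close> plus terms linear in \<open>e\<close>,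
  bounded by \<open>2|e||\<nabla>\<psi>(p)|\<close>.\<close>

lemma vec2_eq_iff: "(x::real^2) = y \<longleftrightarrow> x$1 = y$1 \<and> x$2 = y$2"
  by (simp add: vec_eq_iff forall_2)

lemma inner_vec2: "(x::real^2) \<bullet> y = x$1 * y$1 + x$2 * y$2"
  by (simp add: inner_vec_def sum_2)

lemma power2_norm_vec2: "(norm (x::real^2))\<^sup>2 = (x$1)\<^sup>2 + (x$2)\<^sup>2"
  unfolding power2_norm_eq_inner inner_vec2 by (simp add: power2_eq_square)

lemma vec2_eq_axis_sum: "(x::real^2) = x$1 *\<^sub>R axis 1 1 + x$2 *\<^sub>R axis 2 1"
  by (simp add: vec2_eq_iff axis_def)

lemma perp_nth [simp]: "perp u $ 1 = - (u$2)" "perp u $ 2 = u$1"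
  by (simp_all add: perp_def)

lemma linear_perp: "linear perp"
  by (rule linearI) (simp_all add: vec2_eq_iff algebra_simps)

lemma bounded_linear_perp: "bounded_linear perp"
  using linear_perp linear_conv_bounded_linear by blast

lemma perp_perp: "perp (perp u) = - u"
  by (simp add: vec2_eq_iff)

lemma norm_perp: "norm (perp u) = norm u"
proof -
  have "(norm (perp u))\<^sup>2 = (norm u)\<^sup>2" by (simp add: power2_norm_vec2)
  then show ?thesis by (simp add: power2_eq_iff_nonneg)
qed

lemma inner_power2_add_inner_perp_power2:
  "(g \<bullet> u)\<^sup>2 + (g \<bullet> perp u)\<^sup>2 = (norm g)\<^sup>2 * (norm u)\<^sup>2"
  unfolding power2_norm_vec2 inner_vec2 perp_nth by algebra

lemma abs_inner_minus_perp_le_onorm: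
  assumes "bounded_linear H" and "norm u = 1"
  shows "\<bar>H u \<bullet> (u - perp u)\<bar> \<le> 2 * onorm H"
proof -
  have "\<bar>H u \<bullet> (u - perp u)\<bar> \<le> norm (H u) * norm (u - perp u)"
    by (rule Cauchy_Schwarz_ineq2)
  also have "\<dots> \<le> (onorm H * norm u) * (norm u + norm (perp u))"
    by (intro mult_mono onorm[OF assms(1)] norm_triangle_ineq4)
       (auto intro: onorm_pos_le[OF assms(1)] mult_nonneg_nonneg)
  also have "\<dots> = 2 * onorm H"
    using assms(2) by (simp add: norm_perp)
  finally show ?thesis .
qed


lemma linear_vec2_eq_inner:
  fixes D :: "real^2 \<Rightarrow> real"
  assumes "linear D"
  obtains g where "D = (\<lambda>h. h \<bullet> g)"
proof
  define g :: "real^2" where "g = vector [D (axis 1 1), D (axis 2 1)]"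
  have "D h = h \<bullet> g" for h
  proof -
    have "D h = D (h$1 *\<^sub>R axis 1 1 + h$2 *\<^sub>R axis 2 1)"
      using vec2_eq_axis_sum[of h] by simp
    also have "\<dots> = h$1 * D (axis 1 1) + h$2 * D (axis 2 1)"
      using assms by (simp add: linear_add linear_scale)
    finally show ?thesis by (simp add: g_def inner_vec2)
  qed
  then show "D = (\<lambda>h. h \<bullet> g)" by blast
qed

lemma has_derivative_grad:
  assumes "f differentiable (at p)"
  shows "(f has_derivative (\<lambda>h. h \<bullet> grad f p)) (at p)"
proof -
  obtain D where D: "(f has_derivative D) (at p)"
    using assms differentiable_def by blast
  obtain g where "D = (\<lambda>h. h \<bullet> g)"
    using linear_vec2_eq_inner has_derivative_linear[OF D] by blast
  then have "GDERIV f p :> g"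
    using D by (simp add: gderiv_def)
  then have "GDERIV f p :> grad f p"
    unfolding grad_def by (rule someI)
  then show ?thesis by (simp add: gderiv_def)
qed

lemma smooth_imp_differentiable: "smooth f \<Longrightarrow> f differentiable (at p)"
  unfolding smooth_def by (metis dirderivs.simps(1))

lemma grad_nth:
  assumes "smooth f"
  shows "grad f p $ i = dirderivs f [axis i 1] p"
proof -
  have "frechet_derivative f (at p) = (\<lambda>h. h \<bullet> grad f p)"
    using has_derivative_grad[OF smooth_imp_differentiable[OF assms]] frechet_derivative_at
    by metis
  then show ?thesis by (simp add: inner_axis')
qed

lemma differentiable_grad:
  assumes "smooth f"
  shows "grad f differentiable (at p)"
proof -
  have grad: "grad f = (\<lambda>q. dirderivs f [axis 1 1] q *\<^sub>R axis 1 1 + dirderivs f [axis 2 1] q *\<^sub>R axis 2 1)"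
    by (rule ext, subst vec2_eq_axis_sum) (simp add: grad_nth[OF assms])
  have "dirderivs f vs differentiable (at p)" for vs
    using assms smooth_def by blast
  then show ?thesis
    unfolding grad by (intro differentiable_add differentiable_scaleR differentiable_const)
qed

lemma has_derivative_hess:
  assumes "smooth f"
  shows "(grad f has_derivative hess f p) (at p)"
  unfolding hess_def using differentiable_grad[OF assms] frechet_derivative_works by blast

lemma bounded_linear_hess: "smooth f \<Longrightarrow> bounded_linear (hess f p)"
  using has_derivative_hess has_derivative_bounded_linear by blast


lemma has_derivative_Vfun:
  assumes "smooth \<psi>"
  shows "(Vfun \<psi> y \<epsilon> has_derivative (\<lambda>d. - (fst d \<bullet> grad \<psi> p)
      + \<epsilon> * (2 * (grad \<psi> p \<bullet> (u - perp u)) *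
        (hess \<psi> p (fst d) \<bullet> (u - perp u) + grad \<psi> p \<bullet> (snd d - perp (snd d)))))) (at (p, u))"
proof -
  have V: "Vfun \<psi> y \<epsilon> = (\<lambda>x. y - \<psi> (fst x) + \<epsilon> * (grad \<psi> (fst x) \<bullet> (snd x - perp (snd x)))\<^sup>2)"
    by (rule ext) (simp add: Vfun_def split: prod.splits)
  have fst: "(fst has_derivative fst) (at (p, u))"
    by (rule bounded_linear.has_derivative[OF bounded_linear_fst has_derivative_ident, simplified])
  have \<psi>: "((\<lambda>x. \<psi> (fst x)) has_derivative (\<lambda>d. fst d \<bullet> grad \<psi> p)) (at (p, u))"
    using has_derivative_compose[OF fst has_derivative_grad[OF smooth_imp_differentiable[OF assms]]]
    by simp
  have grad: "((\<lambda>x. grad \<psi> (fst x)) has_derivative (\<lambda>d. hess \<psi> p (fst d))) (at (p, u))"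
    using has_derivative_compose[OF fst has_derivative_hess[OF assms]] by simp
  have "bounded_linear (\<lambda>x::(real^2) \<times> (real^2). snd x - perp (snd x))"
    by (intro bounded_linear_sub bounded_linear_snd bounded_linear_compose[OF bounded_linear_perp])
  from bounded_linear.has_derivative[OF this has_derivative_ident]
  have diff: "((\<lambda>x::(real^2) \<times> (real^2). snd x - perp (snd x))
      has_derivative (\<lambda>d. snd d - perp (snd d))) (at (p, u))"
    by simp
  show ?thesis
    unfolding V
    by (rule has_derivative_eq_rhs,
        (rule derivative_intros \<psi> has_derivative_inner[OF grad diff])+)
       (auto simp: algebra_simps)
qed

lemma lie_deriv_Vfun_SigmaX:
  fixes p u :: "real^2" and \<alpha> c a w :: real and m :: nat
  assumes sm: "smooth \<psi>"
  defines "A \<equiv> grad \<psi> p \<bullet> u" and "B \<equiv> grad \<psi> p \<bullet> perp u"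
    and "h \<equiv> hess \<psi> p u \<bullet> (u - perp u)" and "e \<equiv> a * phi \<psi> \<alpha> c m a (p, u) + w"
  shows "lie_deriv (Vfun \<psi> y \<epsilon>) (SigmaX \<psi> \<alpha> c \<Omega> m a w) (p, u)
    = - ((\<alpha> * c / 2 * A + e) * A) + \<epsilon> * (2 * (A - B) * ((\<alpha> * c / 2 * A + e) * h + \<Omega> * (A + B)))"
proof -
  have Sigma: "SigmaX \<psi> \<alpha> c \<Omega> m a w (p, u) = ((\<alpha> * c / 2 * A + e) *\<^sub>R u, \<Omega> *\<^sub>R perp u)"
    by (simp add: SigmaX_def A_def e_def)
  have hess: "hess \<psi> p ((\<alpha> * c / 2 * A + e) *\<^sub>R u) = (\<alpha> * c / 2 * A + e) *\<^sub>R hess \<psi> p u"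
    using bounded_linear_hess[OF sm] by (simp add: linear_simps)
  have perp: "perp (\<Omega> *\<^sub>R perp u) = - (\<Omega> *\<^sub>R u)"
    using linear_cmul[OF linear_perp] perp_perp by simp
  show ?thesis
    unfolding lie_deriv_def frechet_derivative_at[OF has_derivative_Vfun[OF sm], symmetric] Sigma
    using hess perp
    by (simp add: A_def B_def h_def inner_diff_right inner_add_right algebra_simps inner_commute)
qed


lemma mult_le_weighted_squares:
  fixes K \<Omega> x y :: real
  assumes "\<Omega> > 0"
  shows "K * x * y \<le> \<Omega> * y\<^sup>2 + K\<^sup>2 / (4 * \<Omega>) * x\<^sup>2"
proof -
  have "0 \<le> (2 * \<Omega> * y - K * x)\<^sup>2" by simp
  then have "4 * \<Omega> * (K * x * y) \<le> 4 * \<Omega> * (\<Omega> * y\<^sup>2 + K\<^sup>2 / (4 * \<Omega>) * x\<^sup>2)"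
    using assms by (simp add: power2_eq_square algebra_simps)
  then show ?thesis using assms by simp
qed

lemma perturbation_term_le:
  fixes A B N h e \<epsilon> C :: real
  assumes "\<bar>A\<bar> \<le> N" "\<bar>B\<bar> \<le> N" and "\<bar>h\<bar> \<le> 2 * C"
    and "\<epsilon> > 0" "8 * \<epsilon> * C \<le> 1"
  shows "- (e * A) + 2 * \<epsilon> * (A - B) * e * h \<le> 2 * \<bar>e\<bar> * N"
proof -
  have "- (e * A) \<le> \<bar>e\<bar> * N"
    using assms(1) by (metis abs_ge_minus_self abs_mult abs_ge_zero mult_left_mono order_trans)
  moreover have "\<bar>2 * \<epsilon> * (A - B) * e * h\<bar> = 2 * \<epsilon> * \<bar>A - B\<bar> * \<bar>e\<bar> * \<bar>h\<bar>"
    using assms(4) by (simp add: abs_mult)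
  moreover have "\<dots> \<le> 2 * \<epsilon> * (2 * N) * \<bar>e\<bar> * (2 * C)"
    using assms(1-4) by (intro mult_mono mult_left_mono) auto
  moreover have "\<dots> = (8 * \<epsilon> * C) * (\<bar>e\<bar> * N)" by simp
  moreover have "\<dots> \<le> \<bar>e\<bar> * N"
    using assms(1,5) mult_right_mono[OF assms(5), of "\<bar>e\<bar> * N"] by simp
  ultimately show ?thesis by linarith
qed

lemma drift_term_le:
  fixes A B h \<beta> \<epsilon> C K \<Omega> :: real
  assumes "\<bar>h\<bar> \<le> 2 * C" and "\<Omega> > 0" "\<beta> > 0" "\<epsilon> > 0"
    and K: "K = 4 * \<beta> * C" and small: "\<epsilon> * (K + K\<^sup>2 / (4 * \<Omega>) + 3 * \<Omega>) \<le> \<beta>"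
  shows "- (\<beta> * A\<^sup>2) + 2 * \<epsilon> * (A - B) * (\<beta> * A) * h + 2 * \<epsilon> * \<Omega> * (A\<^sup>2 - B\<^sup>2)
    \<le> - (\<epsilon> * \<Omega> * (A\<^sup>2 + B\<^sup>2))"
proof -
  have "2 * \<epsilon> * (A - B) * (\<beta> * A) * h \<le> \<bar>2 * \<epsilon> * (A - B) * (\<beta> * A) * h\<bar>"
    by simp
  also have "\<dots> = 2 * \<epsilon> * \<beta> * (\<bar>A - B\<bar> * \<bar>A\<bar>) * \<bar>h\<bar>"
    using assms(3,4) by (simp add: abs_mult)
  also have "\<dots> \<le> 2 * \<epsilon> * \<beta> * ((\<bar>A\<bar> + \<bar>B\<bar>) * \<bar>A\<bar>) * (2 * C)"
    using assms(1,3,4) by (intro mult_mono mult_left_mono) auto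
  also have "\<dots> = \<epsilon> * K * A\<^sup>2 + \<epsilon> * (K * \<bar>A\<bar> * \<bar>B\<bar>)"
    by (simp add: K power2_eq_square algebra_simps)
  also have "\<dots> \<le> \<epsilon> * K * A\<^sup>2 + \<epsilon> * (\<Omega> * B\<^sup>2 + K\<^sup>2 / (4 * \<Omega>) * A\<^sup>2)"
    using mult_le_weighted_squares[OF assms(2), of K "\<bar>A\<bar>" "\<bar>B\<bar>"] assms(4) by simp
  finally have cross: "2 * \<epsilon> * (A - B) * (\<beta> * A) * h
      \<le> \<epsilon> * K * A\<^sup>2 + \<epsilon> * (\<Omega> * B\<^sup>2 + K\<^sup>2 / (4 * \<Omega>) * A\<^sup>2)" .
  have "A\<^sup>2 * (\<epsilon> * (K + K\<^sup>2 / (4 * \<Omega>) + 3 * \<Omega>)) \<le> A\<^sup>2 * \<beta>"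
    using small by (intro mult_left_mono) auto
  with cross show ?thesis by (simp add: algebra_simps)
qed

lemma lie_deriv_estimate:
  fixes A B N h e \<beta> \<epsilon> C \<Omega> :: real
  assumes N: "N \<ge> 0" "A\<^sup>2 + B\<^sup>2 = N\<^sup>2" and h: "\<bar>h\<bar> \<le> 2 * C"
    and "\<Omega> > 0" "\<beta> > 0" "\<epsilon> > 0" "8 * \<epsilon> * C \<le> 1"
    and "\<epsilon> * (4 * \<beta> * C + (4 * \<beta> * C)\<^sup>2 / (4 * \<Omega>) + 3 * \<Omega>) \<le> \<beta>"
  shows "- ((\<beta> * A + e) * A) + \<epsilon> * (2 * (A - B) * ((\<beta> * A + e) * h + \<Omega> * (A + B)))
    \<le> (2 * \<bar>e\<bar> - \<epsilon> * \<Omega> * N) * N"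
proof -
  have "\<bar>A\<bar> \<le> N" "\<bar>B\<bar> \<le> N"
    using N by (metis abs_le_square_iff abs_of_nonneg le_add_same_cancel1 le_add_same_cancel2
        zero_le_power2)+
  note perturbation = perturbation_term_le[OF this h assms(6,7), of e]
  note drift = drift_term_le[OF h assms(4-6) refl assms(8), of A B]
  have "- ((\<beta> * A + e) * A) + \<epsilon> * (2 * (A - B) * ((\<beta> * A + e) * h + \<Omega> * (A + B)))
    = (- (\<beta> * A\<^sup>2) + 2 * \<epsilon> * (A - B) * (\<beta> * A) * h + 2 * \<epsilon> * \<Omega> * (A\<^sup>2 - B\<^sup>2))
      + (- (e * A) + 2 * \<epsilon> * (A - B) * e * h)"
    by (simp add: power2_eq_square algebra_simps)
  also have "\<dots> \<le> - (\<epsilon> * \<Omega> * (A\<^sup>2 + B\<^sup>2)) + 2 * \<bar>e\<bar> * N"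
    using perturbation drift by linarith
  also have "\<dots> = (2 * \<bar>e\<bar> - \<epsilon> * \<Omega> * N) * N"
    using N by (simp add: power2_eq_square algebra_simps)
  finally show ?thesis .
qed

lemma lie_deriv_Vfun_SigmaX_le:
  assumes "smooth \<psi>" and hess_bound: "\<And>p. onorm (hess \<psi> p) \<le> C"
    and "\<Omega> > 0" "\<alpha> * c > 0" "\<epsilon> > 0" "a > 0" "norm u = 1" "8 * \<epsilon> * C \<le> 1"
    and "\<epsilon> * (2 * \<alpha> * c * C + (2 * \<alpha> * c * C)\<^sup>2 / (4 * \<Omega>) + 3 * \<Omega>) \<le> \<alpha> * c / 2"
  shows "lie_deriv (Vfun \<psi> y \<epsilon>) (SigmaX \<psi> \<alpha> c \<Omega> m a w) (p, u)
     \<le> (2 * a * \<bar>phi \<psi> \<alpha> c m a (p, u)\<bar> + 2 * \<bar>w\<bar> - \<epsilon> * \<Omega> * norm (grad \<psi> p))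
        * norm (grad \<psi> p)"
proof -
  let ?g = "grad \<psi> p" and ?e = "a * phi \<psi> \<alpha> c m a (p, u) + w"
  have h: "\<bar>hess \<psi> p u \<bullet> (u - perp u)\<bar> \<le> 2 * C"
    using abs_inner_minus_perp_le_onorm[OF bounded_linear_hess[OF assms(1), of p] assms(7)] hess_bound[of p]
    by linarith
  have N: "(?g \<bullet> u)\<^sup>2 + (?g \<bullet> perp u)\<^sup>2 = (norm ?g)\<^sup>2"
    using inner_power2_add_inner_perp_power2[of ?g u] assms(7) by simp
  have "\<alpha> * c / 2 > 0" and K: "4 * (\<alpha> * c / 2) * C = 2 * \<alpha> * c * C"
    using assms(4) by simp_all
  have "\<epsilon> * (4 * (\<alpha> * c / 2) * C + (4 * (\<alpha> * c / 2) * C)\<^sup>2 / (4 * \<Omega>) + 3 * \<Omega>)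
      \<le> \<alpha> * c / 2"
    unfolding K by (fact assms(9))
  from lie_deriv_estimate[OF norm_ge_zero N h assms(3) \<open>\<alpha> * c / 2 > 0\<close> assms(5,8) this]
  have "lie_deriv (Vfun \<psi> y \<epsilon>) (SigmaX \<psi> \<alpha> c \<Omega> m a w) (p, u)
      \<le> (2 * \<bar>?e\<bar> - \<epsilon> * \<Omega> * norm ?g) * norm ?g"
    unfolding lie_deriv_Vfun_SigmaX[OF assms(1)] .
  also have "\<dots> \<le> (2 * a * \<bar>phi \<psi> \<alpha> c m a (p, u)\<bar> + 2 * \<bar>w\<bar> - \<epsilon> * \<Omega> * norm ?g) * norm ?g"
    using abs_triangle_ineq[of "a * phi \<psi> \<alpha> c m a (p, u)" w] assms(6)
    by (intro mult_right_mono) (auto simp: abs_mult)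
  finally show ?thesis .
qed

theorem lemma2:
  fixes \<psi> :: "real^2 \<Rightarrow> real" and ps :: "real^2"
    and \<Omega> \<alpha> c :: real and m :: nat
  assumes smooth: "smooth \<psi>"
    and C1: "\<forall>p. p \<noteq> ps \<longrightarrow> \<psi> p < \<psi> ps"
    and C2: "\<forall>v. v \<noteq> 0 \<longrightarrow> hess \<psi> ps v \<bullet> v < 0"
    and C3: "\<exists>r1>0. \<forall>v. norm v \<le> r1 \<longrightarrow> \<psi> (ps + v) = \<psi> (ps - v)"
    and C4: "\<exists>c1>0. \<forall>p. onorm (hess \<psi> p) \<le> c1"
    and C5: "\<forall>p. p \<noteq> ps \<longrightarrow> grad \<psi> p \<noteq> 0"
    and C6: "\<forall>y. (INF p. ereal (\<psi> p)) < ereal y \<and> y < \<psi> ps \<longrightarrow> compact {p. \<psi> p \<ge> y}"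
    and C7: "\<exists>c2>0. \<exists>r2>0. \<exists>r3>0. \<forall>p v. norm (p - ps) \<ge> r2 \<and> norm v \<le> r3 \<longrightarrow>
               onorm (hess \<psi> (p + v)) \<le> c2 * norm (grad \<psi> p)"
    and \<Omega>: "\<Omega> > 0" and \<alpha>: "\<alpha> > 0" and c: "c > 0"
  shows "\<exists>\<epsilon>2>0. \<forall>\<epsilon> a w p u. 0 < \<epsilon> \<and> \<epsilon> < \<epsilon>2 \<and> a > 0 \<and> norm u = 1 \<longrightarrow>
     lie_deriv (Vfun \<psi> (\<psi> ps) \<epsilon>) (SigmaX \<psi> \<alpha> c \<Omega> m a w) (p, u)
       \<le> (2 * a * \<bar>phi \<psi> \<alpha> c m a (p, u)\<bar> + 2 * \<bar>w\<bar> - \<epsilon> * \<Omega> * norm (grad \<psi> p))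
          * norm (grad \<psi> p)"
proof -
  obtain C where C: "C > 0" "\<And>p. onorm (hess \<psi> p) \<le> C"
    using C4 by blast
  define L where "L = 2 * \<alpha> * c * C + (2 * \<alpha> * c * C)\<^sup>2 / (4 * \<Omega>) + 3 * \<Omega>"
  have "L > 0"
    using \<alpha> c C \<Omega> by (simp add: L_def add_pos_pos)
  define \<epsilon>2 where "\<epsilon>2 = min (1 / (8 * C)) (\<alpha> * c / 2 / L)"
  have "\<epsilon>2 > 0"
    using C \<alpha> c \<open>L > 0\<close> by (simp add: \<epsilon>2_def)
  moreover have "8 * \<epsilon> * C \<le> 1" "\<epsilon> * L \<le> \<alpha> * c / 2" if "\<epsilon> < \<epsilon>2" for \<epsilon>
    using that C \<open>L > 0\<close> by (simp_all add: \<epsilon>2_def field_simps)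
  ultimately show ?thesis
    using lie_deriv_Vfun_SigmaX_le[OF smooth C(2) \<Omega>] \<alpha> c unfolding L_def by auto
qed

end
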